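(* Let $R$ be a commutative coherent ring and $0\to A\to B\to C\to 0$ an exact sequence of $R$-modules with $A$ absolutely $w$-pure. Then $B$ is absolutely $w$-pure if and only if $C$ is absolutely $w$-pure.
   Context: A ring is coherent if every finitely generated ideal is finitely presented. A $GV$-ideal of $R$ is a finitely generated ideal $J$ such that the natural map $R\to\mathrm{Hom}_R(J,R)$ is an isomorphism; $GV(R)$ is the set of $GV$-ideals. An $R$-module $X$ is $GV$-torsion if every $x\in X$ satisfies $Jx=0$ for some $J\in GV(R)$. An $R$-module $A$ is absolutely $w$-pure if $\mathrm{Ext}^1_R(N,A)$ is $GV$-torsion for every finitely presented $R$-module $N$. *)

theory Defs
  imports Complex_Main
begin

(* The ring R is the type 'r :: comm_ring_1; R-modules are types with a scalar
   multiplication satisfying the locale "module" of HOL/Modules. *)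

definition is_ideal :: "'r::comm_ring_1 set \<Rightarrow> bool" where
  "is_ideal I \<longleftrightarrow> 0 \<in> I \<and> (\<forall>x\<in>I. \<forall>y\<in>I. x + y \<in> I) \<and> (\<forall>r. \<forall>x\<in>I. r * x \<in> I)"

definition ideal_generated_by :: "'r::comm_ring_1 set \<Rightarrow> nat \<Rightarrow> (nat \<Rightarrow> 'r) \<Rightarrow> bool" where
  "ideal_generated_by I n g \<longleftrightarrow> I = {(\<Sum>i<n. c i * g i) | c. True}"

definition fin_gen_ideal :: "'r::comm_ring_1 set \<Rightarrow> bool" where
  "fin_gen_ideal I \<longleftrightarrow> (\<exists>n g. ideal_generated_by I n g)"

(* finitely presented: some finite generating system g of I whose module of
   relations (a submodule of R^n) is finitely generated *)
definition fin_pres_ideal :: "'r::comm_ring_1 set \<Rightarrow> bool" where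
  "fin_pres_ideal I \<longleftrightarrow> (\<exists>n g. ideal_generated_by I n g \<and>
     (\<exists>m (rel :: nat \<Rightarrow> nat \<Rightarrow> 'r). (\<forall>j<m. \<forall>i\<ge>n. rel j i = 0) \<and>
        {c :: nat \<Rightarrow> 'r. (\<forall>i\<ge>n. c i = 0) \<and> (\<Sum>i<n. c i * g i) = 0}
          = {(\<lambda>i. \<Sum>j<m. d j * rel j i) | d. True}))"

definition coherent_ring :: "'r::comm_ring_1 itself \<Rightarrow> bool" where
  "coherent_ring (t :: 'r itself) \<longleftrightarrow> (\<forall>I :: 'r set. is_ideal I \<and> fin_gen_ideal I \<longrightarrow> fin_pres_ideal I)"

definition ideal_linear :: "'r::comm_ring_1 set \<Rightarrow> ('r \<Rightarrow> 'r) \<Rightarrow> bool" where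
  "ideal_linear J \<phi> \<longleftrightarrow> (\<forall>x\<in>J. \<forall>y\<in>J. \<phi> (x + y) = \<phi> x + \<phi> y) \<and>
                        (\<forall>r. \<forall>x\<in>J. \<phi> (r * x) = r * \<phi> x)"

(* GV-ideal: finitely generated J with R \<rightarrow> Hom_R(J,R), r \<mapsto> (x \<mapsto> r x), bijective *)
definition GV_ideal :: "'r::comm_ring_1 set \<Rightarrow> bool" where
  "GV_ideal J \<longleftrightarrow> is_ideal J \<and> fin_gen_ideal J \<and>
     (\<forall>r s. (\<forall>x\<in>J. r * x = s * x) \<longrightarrow> r = s) \<and>
     (\<forall>\<phi>. ideal_linear J \<phi> \<longrightarrow> (\<exists>r. \<forall>x\<in>J. \<phi> x = r * x))"

(* The free module R^n, represented as functions nat \<Rightarrow> 'r vanishing from n on *)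
definition fvec :: "nat \<Rightarrow> (nat \<Rightarrow> 'r::comm_ring_1) set" where
  "fvec n = {v. \<forall>i\<ge>n. v i = 0}"

definition fg_submod :: "nat \<Rightarrow> (nat \<Rightarrow> 'r::comm_ring_1) set \<Rightarrow> bool" where
  "fg_submod n K \<longleftrightarrow> (\<exists>m (gen :: nat \<Rightarrow> nat \<Rightarrow> 'r). (\<forall>j<m. gen j \<in> fvec n) \<and>
      K = {(\<lambda>i. \<Sum>j<m. d j * gen j i) | d. True})"

definition lin_on :: "(nat \<Rightarrow> 'r::comm_ring_1) set \<Rightarrow> ('r \<Rightarrow> 'a::ab_group_add \<Rightarrow> 'a)
                      \<Rightarrow> ((nat \<Rightarrow> 'r) \<Rightarrow> 'a) \<Rightarrow> bool" where
  "lin_on K s f \<longleftrightarrow> (\<forall>x\<in>K. \<forall>y\<in>K. f (\<lambda>i. x i + y i) = f x + f y) \<and>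
                    (\<forall>r. \<forall>x\<in>K. f (\<lambda>i. r * x i) = s r (f x))"

(* Every finitely presented module is N = R^n/K with K f.g.; from
   0 \<rightarrow> K \<rightarrow> R^n \<rightarrow> N \<rightarrow> 0 and R^n projective:
   Ext^1(N,A) = Hom(K,A) / image of restriction Hom(R^n,A) \<rightarrow> Hom(K,A),
   and Hom(R^n,A) \<cong> A^n via x \<mapsto> \<Sum> x_i a_i.
   Ext^1(N,A) is GV-torsion iff each class [f] is killed by some GV-ideal J,
   i.e. for each r \<in> J, r f extends to R^n. *)
definition abs_w_pure :: "('r::comm_ring_1 \<Rightarrow> 'a::ab_group_add \<Rightarrow> 'a) \<Rightarrow> bool" where
  "abs_w_pure s \<longleftrightarrow> (\<forall>n (K :: (nat \<Rightarrow> 'r) set). fg_submod n K \<longrightarrow>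
     (\<forall>f. lin_on K s f \<longrightarrow>
        (\<exists>J. GV_ideal J \<and>
           (\<forall>r\<in>J. \<exists>a :: nat \<Rightarrow> 'a. \<forall>x\<in>K. s r (f x) = (\<Sum>i<n. s (x i) (a i))))))"

end

(* Ext^1(R^n/K, M) is represented by linear maps h : K -> M modulo restrictions of maps
   R^n -> M, so M is absolutely w-pure iff for every such h the ideal of scalars u for which u h
   extends to R^n contains a GV-ideal. GV-ideals behave like a Gabriel topology: a product of
   GV-ideals contains a GV-ideal, hence an ideal W contains one as soon as {t. t r in W} does for
   every r of some GV-ideal.

   If C is pure and h : K -> B, then r (g o h) extends for r in a GV-ideal; lifting the extension
   to B, the difference with r h takes values in A, and purity of A extends t r h for t in a
   second GV-ideal. If B is pure and h : K -> C, write K as the image of R^m and lift h on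
   generators to a map R^m -> B. On the relation module L, finitely generated because R is
   coherent, this lift takes values in A, so purity of A corrects r times the lift by a map
   R^m -> A to one vanishing on L, for r in a GV-ideal. The corrected map descends to a map
   K -> B lifting r h, and purity of B concludes. *)

theory Submission
  imports Defs
begin

section \<open>Finite linear combinations\<close>

definition dot :: "nat \<Rightarrow> (nat \<Rightarrow> 'r::comm_ring_1) \<Rightarrow> (nat \<Rightarrow> 'r) \<Rightarrow> 'r" where
  "dot m d v = (\<Sum>j<m. d j * v j)"

definition lincomb :: "nat \<Rightarrow> (nat \<Rightarrow> nat \<Rightarrow> 'r::comm_ring_1) \<Rightarrow> (nat \<Rightarrow> 'r) \<Rightarrow> nat \<Rightarrow> 'r" where
  "lincomb m gen d = (\<lambda>i. dot m d (\<lambda>j. gen j i))"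

definition unit_vec :: "nat \<Rightarrow> nat \<Rightarrow> 'r::comm_ring_1" where
  "unit_vec k = (\<lambda>j. if j = k then 1 else 0)"

lemma dot_cong:
  "(\<And>j. j < m \<Longrightarrow> d j = d' j) \<Longrightarrow> (\<And>j. j < m \<Longrightarrow> v j = v' j) \<Longrightarrow> dot m d v = dot m d' v'"
  unfolding dot_def by (rule sum.cong) auto

lemma dot_commute: "dot m d v = dot m v d"
  unfolding dot_def by (simp add: mult.commute)

lemma dot_add: "dot m (\<lambda>j. d j + d' j) v = dot m d v + dot m d' v"
  unfolding dot_def by (simp add: sum.distrib distrib_right)

lemma dot_diff: "dot m (\<lambda>j. d j - d' j) v = dot m d v - dot m d' v"
  unfolding dot_def by (simp add: sum_subtractf left_diff_distrib)

lemma dot_scale: "dot m (\<lambda>j. r * d j) v = r * dot m d v"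
  unfolding dot_def by (simp add: sum_distrib_left mult.assoc)

lemma dot_zero: "dot m (\<lambda>j. 0) v = 0"
  unfolding dot_def by simp

lemma dot_unit_vec: "k < m \<Longrightarrow> dot m (unit_vec k) v = v k"
  unfolding dot_def unit_vec_def by (simp add: if_distrib[of "\<lambda>x. x * _"] cong: if_cong)

lemma dot_add_dim: "dot (m + M) d v = dot m d v + dot M (\<lambda>k. d (m + k)) (\<lambda>k. v (m + k))"
  unfolding dot_def by (induct M) (simp_all add: add_ac)

lemma dot_dot: "dot m (\<lambda>j. dot p e (\<lambda>k. s k j)) v = dot p e (\<lambda>k. dot m (s k) v)"
  unfolding dot_def
  by (simp add: sum_distrib_left sum_distrib_right mult.assoc sum.swap[of _ "{..<m}"])

lemma lincomb_cong:
  "(\<And>j. j < m \<Longrightarrow> d j = d' j) \<Longrightarrow> (\<And>j. j < m \<Longrightarrow> gen j = gen' j) \<Longrightarrow>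
   lincomb m gen d = lincomb m gen' d'"
  unfolding lincomb_def by (intro ext dot_cong) auto

lemma lincomb_unit_vec: "k < m \<Longrightarrow> lincomb m gen (unit_vec k) = gen k"
  unfolding lincomb_def by (simp add: dot_unit_vec)

lemma lincomb_add: "lincomb m gen (\<lambda>j. d j + d' j) = (\<lambda>i. lincomb m gen d i + lincomb m gen d' i)"
  unfolding lincomb_def by (simp add: dot_add)

lemma lincomb_diff: "lincomb m gen (\<lambda>j. d j - d' j) = (\<lambda>i. lincomb m gen d i - lincomb m gen d' i)"
  unfolding lincomb_def by (simp add: dot_diff)

lemma lincomb_scale: "lincomb m gen (\<lambda>j. r * d j) = (\<lambda>i. r * lincomb m gen d i)"
  unfolding lincomb_def by (simp add: dot_scale)

lemma lincomb_zero: "lincomb m gen (\<lambda>j. 0) = (\<lambda>i. 0)"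
  unfolding lincomb_def by (simp add: dot_zero)

lemma lincomb_zero_gens: "lincomb m (\<lambda>_ _. 0) d = (\<lambda>i. 0)"
  unfolding lincomb_def dot_def by simp

lemma lincomb_lincomb: "lincomb m gen (lincomb p s e) = lincomb p (\<lambda>k. lincomb m gen (s k)) e"
  unfolding lincomb_def by (simp add: dot_dot)

lemma lincomb_in_fvec: "(\<And>j. j < m \<Longrightarrow> gen j \<in> fvec n) \<Longrightarrow> lincomb m gen d \<in> fvec n"
  unfolding fvec_def lincomb_def dot_def by simp

lemma fvec_eq_lincomb_unit_vec:
  assumes "d \<in> fvec m" shows "d = lincomb m unit_vec d"
proof
  fix i
  show "d i = lincomb m unit_vec d i"
  proof (cases "i < m")
    case True
    have "lincomb m unit_vec d i = dot m (unit_vec i) d"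
      unfolding lincomb_def dot_commute[of _ d] by (rule dot_cong) (auto simp: unit_vec_def)
    then show ?thesis using True by (simp add: dot_unit_vec)
  next
    case False
    then show ?thesis using assms by (simp add: lincomb_def unit_vec_def fvec_def dot_def)
  qed
qed

lemma fvec_truncate:
  obtains d' :: "nat \<Rightarrow> 'r::comm_ring_1" where "d' \<in> fvec m" "\<And>j. j < m \<Longrightarrow> d' j = d j"
proof
  show "(\<lambda>j. if j < m then d j else 0) \<in> fvec m" by (simp add: fvec_def)
qed simp

lemma unit_vec_in_fvec: "k < m \<Longrightarrow> unit_vec k \<in> fvec m"
  by (simp add: unit_vec_def fvec_def)

lemma lincomb_diff_gens:
  "lincomb m (\<lambda>j i. gen j i - gen' j i) d = (\<lambda>i. lincomb m gen d i - lincomb m gen' d i)"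
  unfolding lincomb_def dot_def by (simp add: sum_subtractf right_diff_distrib)

lemma lincomb_append:
  "lincomb (m + M) (\<lambda>x. if x < m then E x else F (x - m)) (\<lambda>x. if x < m then d x else e (x - m)) =
   (\<lambda>i. lincomb m E d i + lincomb M F e i)"
  unfolding lincomb_def dot_add_dim by (intro ext arg_cong2[where f = "(+)"] dot_cong) auto

lemma dot_lincomb:
  assumes "\<And>j. j < m \<Longrightarrow> \<alpha> j = dot n (A j) g"
  shows "dot n (lincomb m A d) g = dot m d \<alpha>"
proof -
  have "dot n (lincomb m A d) g = dot m d (\<lambda>j. dot n (A j) g)"
    unfolding lincomb_def by (rule dot_dot)
  also have "\<dots> = dot m d \<alpha>" using assms by (intro dot_cong) simp_all
  finally show ?thesis .
qed

section \<open>Ideals spanned by finite families\<close>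

definition span_of :: "nat \<Rightarrow> (nat \<Rightarrow> 'r::comm_ring_1) \<Rightarrow> 'r set" where
  "span_of n g = range (\<lambda>c. dot n c g)"

lemma ideal_generated_by_iff_span_of: "ideal_generated_by I n g \<longleftrightarrow> I = span_of n g"
  unfolding ideal_generated_by_def span_of_def dot_def by (simp add: full_SetCompr_eq)

lemma is_idealD:
  assumes "is_ideal W"
  shows "0 \<in> W" "x \<in> W \<Longrightarrow> y \<in> W \<Longrightarrow> x + y \<in> W" "x \<in> W \<Longrightarrow> r * x \<in> W" "x \<in> W \<Longrightarrow> x * r \<in> W"
  using assms unfolding is_ideal_def by (auto simp: mult.commute[of _ r])

lemma is_ideal_Int: "is_ideal I \<Longrightarrow> is_ideal J \<Longrightarrow> is_ideal (I \<inter> J)"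
  unfolding is_ideal_def by blast

lemma is_ideal_mult_preimage: "is_ideal W \<Longrightarrow> is_ideal {x. x * y \<in> W}"
  unfolding is_ideal_def by (simp add: distrib_right mult.assoc)

lemma sum_mem_ideal: "is_ideal W \<Longrightarrow> (\<And>k. k \<in> A \<Longrightarrow> f k \<in> W) \<Longrightarrow> sum f A \<in> W"
  by (induct A rule: infinite_finite_induct) (auto intro: is_idealD)

lemma is_ideal_span_of: "is_ideal (span_of n g)"
  unfolding is_ideal_def span_of_def
proof (intro conjI ballI allI)
  show "0 \<in> range (\<lambda>c. dot n c g)" using dot_zero by (metis rangeI)
next
  fix x y assume "x \<in> range (\<lambda>c. dot n c g)" "y \<in> range (\<lambda>c. dot n c g)"
  then show "x + y \<in> range (\<lambda>c. dot n c g)" by (auto simp: dot_add[symmetric])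
next
  fix r x assume "x \<in> range (\<lambda>c. dot n c g)"
  then show "r * x \<in> range (\<lambda>c. dot n c g)" by (auto simp: dot_scale[symmetric])
qed

lemma gen_mem_span_of: "k < n \<Longrightarrow> g k \<in> span_of n g"
  unfolding span_of_def by (metis dot_unit_vec rangeI)

lemma span_of_subset: "is_ideal W \<Longrightarrow> (\<And>k. k < n \<Longrightarrow> g k \<in> W) \<Longrightarrow> span_of n g \<subseteq> W"
  unfolding span_of_def dot_def by (auto intro!: sum_mem_ideal is_idealD(3))

lemma span_of_mult_subset:
  "is_ideal W \<Longrightarrow> (\<And>k. k < n \<Longrightarrow> g k * y \<in> W) \<Longrightarrow> x \<in> span_of n g \<Longrightarrow> x * y \<in> W"
  using span_of_subset[of "{x. x * y \<in> W}" n g] is_ideal_mult_preimage by blast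

lemma mult_eq_on_span_of:
  assumes "\<And>k. k < n \<Longrightarrow> r * g k = s * g k" and "x \<in> span_of n g"
  shows "r * x = s * x"
proof -
  have "is_ideal {x. r * x = s * x}"
    unfolding is_ideal_def by (simp add: distrib_left mult.left_commute)
  then show ?thesis using span_of_subset assms by blast
qed

lemma ideal_linear_eq_on_span_of:
  assumes "ideal_linear (span_of n g) \<phi>" and "\<And>k. k < n \<Longrightarrow> \<phi> (g k) = c * g k"
    and "x \<in> span_of n g"
  shows "\<phi> x = c * x"
proof -
  have "is_ideal {x \<in> span_of n g. \<phi> x = c * x}"
    using assms(1) is_ideal_span_of[of n g] unfolding is_ideal_def ideal_linear_def
    by (simp add: distrib_left mult.left_commute) (metis mult_zero_left)
  then show ?thesis using span_of_subset[of _ n g] assms(2,3) gen_mem_span_of by blast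
qed

lemma mem_span_ofE:
  assumes "x \<in> span_of n g"
  obtains c where "c \<in> fvec n" "x = dot n c g"
proof -
  obtain c where c: "x = dot n c g" using assms unfolding span_of_def by blast
  obtain c' where c': "c' \<in> fvec n" "\<And>j. j < n \<Longrightarrow> c' j = c j"
    by (rule fvec_truncate[of n c]) blast
  have "x = dot n c' g" unfolding c using c'(2) by (intro dot_cong) simp_all
  with c'(1) show ?thesis by (rule that)
qed

lemma span_of_subsetE:
  assumes "span_of m \<alpha> \<subseteq> span_of n g"
  obtains A where "\<And>j. j < m \<Longrightarrow> A j \<in> fvec n" "\<And>j. j < m \<Longrightarrow> \<alpha> j = dot n (A j) g"
proof -
  have "\<exists>c. c \<in> fvec n \<and> \<alpha> j = dot n c g" if "j < m" for j
    using gen_mem_span_of[OF that, of \<alpha>] assms by (auto elim: mem_span_ofE)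
  then show ?thesis using that by metis
qed

section \<open>GV-ideals\<close>

lemma GV_ideal_UNIV: "GV_ideal (UNIV :: 'r::comm_ring_1 set)"
  unfolding GV_ideal_def
proof (intro conjI allI impI)
  show "is_ideal (UNIV :: 'r set)" by (simp add: is_ideal_def)
  have "(UNIV :: 'r set) = span_of 1 (\<lambda>_. 1)"
    unfolding span_of_def dot_def by (auto intro: range_eqI[of _ _ "\<lambda>_. _"])
  then show "fin_gen_ideal (UNIV :: 'r set)"
    unfolding fin_gen_ideal_def ideal_generated_by_iff_span_of by blast
next
  fix r s :: 'r assume "\<forall>x\<in>UNIV. r * x = s * x"
  then show "r = s" by (metis UNIV_I mult.comm_neutral)
next
  fix \<phi> :: "'r \<Rightarrow> 'r" assume "ideal_linear UNIV \<phi>"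
  then have "\<phi> x = \<phi> 1 * x" for x unfolding ideal_linear_def by (metis UNIV_I mult.commute mult_1_right)
  then show "\<exists>c. \<forall>x\<in>UNIV. \<phi> x = c * x" by blast
qed

lemma GV_ideal_span_of:
  assumes "GV_ideal I" obtains n g where "I = span_of n g"
  using assms unfolding GV_ideal_def fin_gen_ideal_def ideal_generated_by_iff_span_of by blast

lemma GV_idealD:
  assumes "GV_ideal J"
  shows "is_ideal J" and "(\<And>x. x \<in> J \<Longrightarrow> r * x = s * x) \<Longrightarrow> r = s"
    and "ideal_linear J \<phi> \<Longrightarrow> \<exists>c. \<forall>x\<in>J. \<phi> x = c * x"
  using assms unfolding GV_ideal_def by blast+

lemma GV_idealI:
  assumes "I = span_of n g"
    and "\<And>r s. (\<And>x. x \<in> I \<Longrightarrow> r * x = s * x) \<Longrightarrow> r = s"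
    and "\<And>\<phi>. ideal_linear I \<phi> \<Longrightarrow> \<exists>c. \<forall>x\<in>I. \<phi> x = c * x"
  shows "GV_ideal I"
  using assms is_ideal_span_of unfolding GV_ideal_def fin_gen_ideal_def ideal_generated_by_iff_span_of
  by blast

definition prod_gens :: "nat \<Rightarrow> (nat \<Rightarrow> 'r::comm_ring_1) \<Rightarrow> (nat \<Rightarrow> 'r) \<Rightarrow> nat \<Rightarrow> 'r" where
  "prod_gens m g h k = g (k div m) * h (k mod m)"

lemma prod_gens_index:
  assumes "a < n" "b < m"
  shows "a * m + b < n * m" and "prod_gens m g h (a * m + b) = g a * h b"
proof -
  have "Suc a * m \<le> n * m" using assms by (intro mult_le_mono1) simp
  then show "a * m + b < n * m" using assms by simp
  show "prod_gens m g h (a * m + b) = g a * h b" unfolding prod_gens_def using assms by simp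
qed

lemma prod_gens_cases:
  assumes "k < n * m" obtains a b where "a < n" "b < m" "prod_gens m g h k = g a * h b"
proof
  show "k div m < n" using assms by (simp add: less_mult_imp_div_less)
  show "k mod m < m" using assms by (cases "m = 0") simp_all
qed (simp add: prod_gens_def)

lemma span_of_prod_gens_subset:
  assumes "is_ideal W" "\<And>a b. a < n \<Longrightarrow> b < m \<Longrightarrow> g a * h b \<in> W"
  shows "span_of (n * m) (prod_gens m g h) \<subseteq> W"
  by (rule span_of_subset[OF assms(1)]) (metis prod_gens_cases assms(2))

lemma mult_mem_span_of_prod_gens:
  assumes "x \<in> span_of n g" "y \<in> span_of m h"
  shows "x * y \<in> span_of (n * m) (prod_gens m g h)"
proof (rule span_of_mult_subset[OF is_ideal_span_of _ assms(1)])
  fix a assume "a < n"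
  have "y * g a \<in> span_of (n * m) (prod_gens m g h)"
  proof (rule span_of_mult_subset[OF is_ideal_span_of _ assms(2)])
    fix b assume "b < m"
    then show "h b * g a \<in> span_of (n * m) (prod_gens m g h)"
      using prod_gens_index[OF \<open>a < n\<close>] gen_mem_span_of by (metis mult.commute)
  qed
  then show "g a * y \<in> span_of (n * m) (prod_gens m g h)" by (simp add: mult.commute)
qed

lemma ideal_linear_factor_through_mult:
  assumes lin: "ideal_linear P \<phi>" and I: "is_ideal I" and J: "GV_ideal J"
    and IJ: "\<And>x y. x \<in> I \<Longrightarrow> y \<in> J \<Longrightarrow> x * y \<in> P"
  obtains \<chi> where "ideal_linear I \<chi>" "\<And>x y. x \<in> I \<Longrightarrow> y \<in> J \<Longrightarrow> \<phi> (x * y) = \<chi> x * y"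
proof -
  have "\<exists>c. \<forall>y\<in>J. \<phi> (x * y) = c * y" if "x \<in> I" for x
  proof (rule GV_idealD(3)[OF J])
    show "ideal_linear J (\<lambda>y. \<phi> (x * y))"
      using lin IJ[OF that] unfolding ideal_linear_def by (simp add: distrib_left mult.left_commute)
  qed
  then obtain \<chi> where \<chi>: "\<And>x y. x \<in> I \<Longrightarrow> y \<in> J \<Longrightarrow> \<phi> (x * y) = \<chi> x * y"
    by (metis (lifting))
  have "ideal_linear I \<chi>"
    unfolding ideal_linear_def
  proof (intro conjI ballI allI)
    fix x x' assume x: "x \<in> I" "x' \<in> I"
    show "\<chi> (x + x') = \<chi> x + \<chi> x'"
    proof (rule GV_idealD(2)[OF J])
      fix y assume y: "y \<in> J"
      have "\<chi> (x + x') * y = \<phi> ((x + x') * y)"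
        using \<chi>[OF is_idealD(2)[OF I x] y] by simp
      also have "\<dots> = \<phi> (x * y) + \<phi> (x' * y)"
        using lin IJ x y unfolding ideal_linear_def distrib_right by simp
      also have "\<dots> = (\<chi> x + \<chi> x') * y"
        using \<chi> x y by (simp add: distrib_right)
      finally show "\<chi> (x + x') * y = (\<chi> x + \<chi> x') * y" .
    qed
  next
    fix r x assume x: "x \<in> I"
    show "\<chi> (r * x) = r * \<chi> x"
    proof (rule GV_idealD(2)[OF J])
      fix y assume y: "y \<in> J"
      have "\<chi> (r * x) * y = \<phi> (r * x * y)"
        using \<chi>[OF is_idealD(3)[OF I x] y] by simp
      also have "\<dots> = r * \<chi> x * y"
        using lin IJ x y \<chi> unfolding ideal_linear_def by (simp add: mult.assoc)
      finally show "\<chi> (r * x) * y = r * \<chi> x * y" .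
    qed
  qed
  with \<chi> show ?thesis using that by blast
qed

lemma GV_ideal_prod_gens:
  assumes I: "GV_ideal (span_of n g)" and J: "GV_ideal (span_of m h)"
  shows "GV_ideal (span_of (n * m) (prod_gens m g h))" (is "GV_ideal ?P")
proof (rule GV_idealI[OF refl])
  fix r s assume eq: "\<And>z. z \<in> ?P \<Longrightarrow> r * z = s * z"
  have "r * g a = s * g a" if "a < n" for a
  proof (rule GV_idealD(2)[OF J])
    fix y assume "y \<in> span_of m h"
    then have "g a * y \<in> ?P" by (rule mult_mem_span_of_prod_gens[OF gen_mem_span_of[OF that]])
    then show "r * g a * y = s * g a * y" using eq by (simp add: mult.assoc)
  qed
  then show "r = s" using GV_idealD(2)[OF I] mult_eq_on_span_of by blast
next
  fix \<phi> assume lin: "ideal_linear ?P \<phi>"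
  obtain \<chi> where \<chi>: "ideal_linear (span_of n g) \<chi>"
    "\<And>x y. x \<in> span_of n g \<Longrightarrow> y \<in> span_of m h \<Longrightarrow> \<phi> (x * y) = \<chi> x * y"
    using ideal_linear_factor_through_mult[OF lin is_ideal_span_of J mult_mem_span_of_prod_gens] by blast
  obtain c where c: "\<forall>x\<in>span_of n g. \<chi> x = c * x" using GV_idealD(3)[OF I \<chi>(1)] by blast
  have "\<phi> (prod_gens m g h k) = c * prod_gens m g h k" if k: "k < n * m" for k
  proof -
    obtain a b where "a < n" "b < m" "prod_gens m g h k = g a * h b"
      using prod_gens_cases[OF k] .
    then show ?thesis
      using \<chi>(2) c gen_mem_span_of[OF \<open>a < n\<close>, of g] gen_mem_span_of[OF \<open>b < m\<close>, of h]
      by (simp add: mult.assoc)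
  qed
  then show "\<exists>c. \<forall>z\<in>?P. \<phi> z = c * z" using ideal_linear_eq_on_span_of[OF lin] by blast
qed

definition contains_GV_ideal :: "'r::comm_ring_1 set \<Rightarrow> bool" where
  "contains_GV_ideal W \<longleftrightarrow> (\<exists>J. GV_ideal J \<and> J \<subseteq> W)"

lemma contains_GV_ideal_mono: "contains_GV_ideal W \<Longrightarrow> W \<subseteq> W' \<Longrightarrow> contains_GV_ideal W'"
  unfolding contains_GV_ideal_def by blast

lemma contains_GV_ideal_mult:
  assumes I: "GV_ideal I" and J: "GV_ideal J" and W: "is_ideal W"
    and IJ: "\<And>x y. x \<in> I \<Longrightarrow> y \<in> J \<Longrightarrow> x * y \<in> W"
  shows "contains_GV_ideal W"
proof -
  obtain n g where Ig: "I = span_of n g" using I by (rule GV_ideal_span_of)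
  obtain m h where Jh: "J = span_of m h" using J by (rule GV_ideal_span_of)
  have "span_of (n * m) (prod_gens m g h) \<subseteq> W"
    by (rule span_of_prod_gens_subset[OF W]) (simp add: IJ Ig Jh gen_mem_span_of)
  then show ?thesis
    using GV_ideal_prod_gens I J Ig Jh unfolding contains_GV_ideal_def by blast
qed

lemma contains_GV_ideal_INT:
  "finite A \<Longrightarrow> (\<And>a. a \<in> A \<Longrightarrow> GV_ideal (Js a)) \<Longrightarrow> contains_GV_ideal (\<Inter>a\<in>A. Js a)"
proof (induct A rule: finite_induct)
  case empty
  show ?case using GV_ideal_UNIV unfolding contains_GV_ideal_def by auto
next
  case (insert q A)
  then obtain J where J: "GV_ideal J" "J \<subseteq> (\<Inter>a\<in>A. Js a)"
    unfolding contains_GV_ideal_def by auto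
  have Jq: "GV_ideal (Js q)" using insert.prems by simp
  have "contains_GV_ideal (J \<inter> Js q)"
  proof (rule contains_GV_ideal_mult[OF J(1) Jq])
    show "is_ideal (J \<inter> Js q)" by (intro is_ideal_Int GV_idealD(1) J(1) Jq)
    fix x y assume "x \<in> J" "y \<in> Js q"
    then show "x * y \<in> J \<inter> Js q" by (intro IntI is_idealD(3,4) GV_idealD(1) J(1) Jq)
  qed
  then show ?case
    by (rule contains_GV_ideal_mono) (use J(2) in auto)
qed

lemma contains_GV_ideal_transitive:
  assumes W: "is_ideal W" and J: "GV_ideal J"
    and cover: "\<And>r. r \<in> J \<Longrightarrow> contains_GV_ideal {t. t * r \<in> W}"
  shows "contains_GV_ideal W"
proof -
  obtain p u where Ju: "J = span_of p u" using J by (rule GV_ideal_span_of)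
  have "\<exists>J'. GV_ideal J' \<and> J' \<subseteq> {t. t * u a \<in> W}" if "a < p" for a
    using cover gen_mem_span_of[OF that, of u] Ju unfolding contains_GV_ideal_def by simp
  then obtain Js where Js: "\<And>a. a < p \<Longrightarrow> GV_ideal (Js a)" "\<And>a. a < p \<Longrightarrow> Js a \<subseteq> {t. t * u a \<in> W}"
    by metis
  obtain J' where J': "GV_ideal J'" "J' \<subseteq> (\<Inter>a<p. Js a)"
    using contains_GV_ideal_INT[of "{..<p}" Js] Js(1) unfolding contains_GV_ideal_def by blast
  show ?thesis
  proof (rule contains_GV_ideal_mult[OF J J'(1) W])
    fix x y assume "x \<in> J" "y \<in> J'"
    have "u a * y \<in> W" if "a < p" for a
      using Js(2)[OF that] J'(2) \<open>y \<in> J'\<close> that by (auto simp: mult.commute)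
    then show "x * y \<in> W" using span_of_mult_subset[OF W] \<open>x \<in> J\<close> Ju by blast
  qed
qed

section \<open>Relation modules over a coherent ring\<close>

definition relations :: "nat \<Rightarrow> (nat \<Rightarrow> nat \<Rightarrow> 'r::comm_ring_1) \<Rightarrow> (nat \<Rightarrow> 'r) set" where
  "relations m gen = {d \<in> fvec m. lincomb m gen d = (\<lambda>i. 0)}"

lemma mem_relations_const: "d \<in> relations m (\<lambda>j _. \<alpha> j) \<longleftrightarrow> d \<in> fvec m \<and> dot m d \<alpha> = 0"
  unfolding relations_def lincomb_def by (simp add: fun_eq_iff)

lemma fg_submod_iff:
  "fg_submod n K \<longleftrightarrow> (\<exists>m gen. (\<forall>j<m. gen j \<in> fvec n) \<and> K = range (lincomb m gen))"
  unfolding fg_submod_def lincomb_def dot_def by (simp add: full_SetCompr_eq)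

lemma fg_submodE:
  assumes "fg_submod n K"
  obtains m gen where "\<And>j. j < m \<Longrightarrow> gen j \<in> K" "K = range (lincomb m gen)"
proof -
  obtain m gen where K: "K = range (lincomb m gen)" using assms unfolding fg_submod_iff by blast
  have "gen j \<in> K" if "j < m" for j
    unfolding K using lincomb_unit_vec[OF that, of gen] by (metis rangeI)
  from this K show ?thesis by (rule that)
qed

lemma fin_pres_ideal_iff:
  "fin_pres_ideal I \<longleftrightarrow> (\<exists>n g. I = span_of n g \<and> fg_submod n (relations n (\<lambda>i _. g i)))"
proof -
  have rel: "relations n (\<lambda>i _. g i) = {c. (\<forall>i\<ge>n. c i = 0) \<and> (\<Sum>i<n. c i * g i) = 0}" for n g
    by (auto simp: mem_relations_const fvec_def dot_def)
  show ?thesis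
    unfolding fin_pres_ideal_def fg_submod_def ideal_generated_by_iff_span_of rel by (simp add: fvec_def)
qed

lemma lincomb_mem_relations:
  assumes "\<And>k. k < M \<Longrightarrow> G k \<in> relations m gen"
  shows "lincomb M G e \<in> relations m gen"
proof -
  have "lincomb m gen (lincomb M G e) = lincomb M (\<lambda>_ _. 0) e"
    unfolding lincomb_lincomb using assms by (intro lincomb_cong) (auto simp: relations_def)
  then show ?thesis
    using assms lincomb_in_fvec[of M G m e] by (simp add: relations_def lincomb_zero_gens)
qed

lemma fg_submod_relationsI:
  assumes "\<And>k. k < M \<Longrightarrow> G k \<in> relations m gen"
    and "\<And>d. d \<in> relations m gen \<Longrightarrow> \<exists>e. d = lincomb M G e"
  shows "fg_submod m (relations m gen)"
  unfolding fg_submod_iff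
proof (intro exI conjI)
  show "\<forall>k<M. G k \<in> fvec m" using assms(1) by (simp add: relations_def)
  show "relations m gen = range (lincomb M G)"
  proof
    show "relations m gen \<subseteq> range (lincomb M G)" using assms(2) by blast
    show "range (lincomb M G) \<subseteq> relations m gen" using lincomb_mem_relations[of M G m gen] assms(1) by blast
  qed
qed

lemma fg_submod_relations_appendI:
  assumes E: "\<And>k. k < p \<Longrightarrow> E k \<in> relations m gen" and F: "\<And>k. k < q \<Longrightarrow> F k \<in> relations m gen"
    and span: "\<And>d. d \<in> relations m gen \<Longrightarrow> \<exists>e1 e2. d = (\<lambda>i. lincomb p E e1 i + lincomb q F e2 i)"
  shows "fg_submod m (relations m gen)"
proof (rule fg_submod_relationsI[where M = "p + q" and G = "\<lambda>k. if k < p then E k else F (k - p)"])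
  fix k assume "k < p + q"
  then show "(if k < p then E k else F (k - p)) \<in> relations m gen" using E F by simp
next
  fix d assume "d \<in> relations m gen"
  then obtain e1 e2 where "d = (\<lambda>i. lincomb p E e1 i + lincomb q F e2 i)" using span by blast
  then show "\<exists>e. d = lincomb (p + q) (\<lambda>k. if k < p then E k else F (k - p)) e"
    unfolding lincomb_append[symmetric] by blast
qed

lemma fg_relations_change_generators:
  fixes \<alpha> g :: "nat \<Rightarrow> 'r::comm_ring_1"
  assumes span: "span_of m \<alpha> = span_of n g" and fg: "fg_submod n (relations n (\<lambda>i _. g i))"
  shows "fg_submod m (relations m (\<lambda>j _. \<alpha> j))"
proof -
  obtain A where A: "\<And>j. j < m \<Longrightarrow> A j \<in> fvec n" "\<And>j. j < m \<Longrightarrow> \<alpha> j = dot n (A j) g"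
    by (rule span_of_subsetE[OF equalityD1[OF span]]) blast
  obtain B where B: "\<And>i. i < n \<Longrightarrow> B i \<in> fvec m" "\<And>i. i < n \<Longrightarrow> g i = dot m (B i) \<alpha>"
    by (rule span_of_subsetE[OF equalityD2[OF span]]) blast
  obtain M rel where rel: "\<And>k. k < M \<Longrightarrow> rel k \<in> relations n (\<lambda>i _. g i)"
    "relations n (\<lambda>i _. g i) = range (lincomb M rel)"
    using fg by (rule fg_submodE) blast
  define E where "E = (\<lambda>j l. unit_vec j l - lincomb n B (A j) l)"
  show ?thesis
  proof (rule fg_submod_relations_appendI[where p = m and E = E and q = M and F = "\<lambda>k. lincomb n B (rel k)"])
    fix j assume j: "j < m"
    have "dot m (E j) \<alpha> = \<alpha> j - dot n (A j) g"
      unfolding E_def dot_diff dot_unit_vec[OF j] using dot_lincomb[OF B(2)] by simp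
    then show "E j \<in> relations m (\<lambda>j _. \<alpha> j)" using j A(2) unit_vec_in_fvec[OF j] lincomb_in_fvec[OF B(1)]
      by (simp add: mem_relations_const E_def fvec_def)
  next
    fix k assume "k < M"
    then show "lincomb n B (rel k) \<in> relations m (\<lambda>j _. \<alpha> j)"
      using rel(1) lincomb_in_fvec[OF B(1)] by (simp add: mem_relations_const dot_lincomb[OF B(2)])
  next
    fix d assume d: "d \<in> relations m (\<lambda>j _. \<alpha> j)"
    have "lincomb m A d \<in> relations n (\<lambda>i _. g i)"
      using d lincomb_in_fvec[OF A(1)] by (simp add: mem_relations_const dot_lincomb[OF A(2)])
    then obtain e where e: "lincomb m A d = lincomb M rel e" using rel(2) by blast
    have "lincomb m E d = (\<lambda>l. d l - lincomb n B (lincomb m A d) l)"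
      using fvec_eq_lincomb_unit_vec[of d m] d
      by (simp add: E_def lincomb_diff_gens lincomb_lincomb mem_relations_const)
    moreover have "lincomb M (\<lambda>k. lincomb n B (rel k)) e = lincomb n B (lincomb m A d)"
      unfolding e lincomb_lincomb ..
    ultimately have "d = (\<lambda>i. lincomb m E d i + lincomb M (\<lambda>k. lincomb n B (rel k)) e i)" by simp
    then show "\<exists>e1 e2. d = (\<lambda>i. lincomb m E e1 i + lincomb M (\<lambda>k. lincomb n B (rel k)) e2 i)"
      by blast
  qed
qed

lemma fg_relations_scalars:
  fixes \<alpha> :: "nat \<Rightarrow> 'r::comm_ring_1"
  assumes "coherent_ring TYPE('r)"
  shows "fg_submod m (relations m (\<lambda>j _. \<alpha> j))"
proof -
  have "fin_gen_ideal (span_of m \<alpha>)"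
    unfolding fin_gen_ideal_def ideal_generated_by_iff_span_of by blast
  then have "fin_pres_ideal (span_of m \<alpha>)"
    using assms is_ideal_span_of unfolding coherent_ring_def by blast
  then obtain n g where "span_of m \<alpha> = span_of n g" "fg_submod n (relations n (\<lambda>i _. g i))"
    unfolding fin_pres_ideal_iff by blast
  then show ?thesis by (rule fg_relations_change_generators)
qed

lemma fg_relations_compose:
  assumes s: "\<And>k. k < p \<Longrightarrow> s k \<in> fvec m" and rel_sub: "relations m gen \<subseteq> range (lincomb p s)"
    and fg: "fg_submod p (relations p (\<lambda>k. lincomb m gen (s k)))"
  shows "fg_submod m (relations m gen)"
proof -
  obtain q t where t: "\<And>l. l < q \<Longrightarrow> t l \<in> relations p (\<lambda>k. lincomb m gen (s k))"
    "relations p (\<lambda>k. lincomb m gen (s k)) = range (lincomb q t)"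
    using fg by (rule fg_submodE) blast
  show ?thesis
  proof (rule fg_submod_relationsI[where M = q and G = "\<lambda>l. lincomb p s (t l)"])
    fix l assume "l < q"
    then show "lincomb p s (t l) \<in> relations m gen"
      using t(1) s lincomb_in_fvec[of p s m] by (simp add: relations_def lincomb_lincomb)
  next
    fix d assume d: "d \<in> relations m gen"
    then obtain e where e: "d = lincomb p s e" using rel_sub by blast
    obtain e' where e': "e' \<in> fvec p" "\<And>k. k < p \<Longrightarrow> e' k = e k"
      by (rule fvec_truncate[of p e]) blast
    have de': "d = lincomb p s e'" unfolding e using e'(2) by (intro lincomb_cong) simp_all
    then have "e' \<in> relations p (\<lambda>k. lincomb m gen (s k))"
      using d e'(1) by (simp add: relations_def lincomb_lincomb[symmetric])
    then obtain f where "e' = lincomb q t f" using t(2) by blast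
    then show "\<exists>f. d = lincomb q (\<lambda>l. lincomb p s (t l)) f"
      using de' by (auto simp: lincomb_lincomb)
  qed
qed

lemma fg_relations:
  fixes gen :: "nat \<Rightarrow> nat \<Rightarrow> 'r::comm_ring_1"
  assumes coh: "coherent_ring TYPE('r)" and gen: "\<And>j. j < m \<Longrightarrow> gen j \<in> fvec n"
  shows "fg_submod m (relations m gen)"
  using gen
proof (induct n arbitrary: m gen)
  case 0
  then have "lincomb m gen d = lincomb m (\<lambda>_ _. 0) d" for d
    by (intro lincomb_cong) (auto simp: fvec_def)
  then have "relations m gen = fvec m" by (simp add: relations_def lincomb_zero_gens)
  then show ?case
    by (intro fg_submod_relationsI[where M = m and G = unit_vec])
      (auto intro: unit_vec_in_fvec fvec_eq_lincomb_unit_vec)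
next
  case (Suc n)
  obtain p s where s: "\<And>k. k < p \<Longrightarrow> s k \<in> relations m (\<lambda>j _. gen j n)"
    "relations m (\<lambda>j _. gen j n) = range (lincomb p s)"
    by (rule fg_submodE[OF fg_relations_scalars[OF coh, of m "\<lambda>j. gen j n"]]) blast
  have "relations m gen \<subseteq> relations m (\<lambda>j _. gen j n)"
    by (auto simp: relations_def mem_relations_const lincomb_def fun_eq_iff)
  then have rel_sub: "relations m gen \<subseteq> range (lincomb p s)" using s(2) by simp
  have "lincomb m gen (s k) \<in> fvec n" if "k < p" for k
  proof -
    have "lincomb m gen (s k) \<in> fvec (Suc n)" by (rule lincomb_in_fvec[OF Suc.prems])
    moreover have "lincomb m gen (s k) n = 0"
      using s(1)[OF that] by (simp add: mem_relations_const lincomb_def)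
    ultimately have "lincomb m gen (s k) i = 0" if "i \<ge> n" for i
      using that by (cases "i = n") (auto simp: fvec_def)
    then show ?thesis by (simp add: fvec_def)
  qed
  then have "fg_submod p (relations p (\<lambda>k. lincomb m gen (s k)))" by (rule Suc.hyps)
  moreover have "s k \<in> fvec m" if "k < p" for k using s(1)[OF that] by (simp add: relations_def)
  ultimately show ?case using fg_relations_compose rel_sub by blast
qed

section \<open>Linear maps on submodules of R^n\<close>

lemma lin_on_hom: "module_hom s s' f \<Longrightarrow> lin_on K s h \<Longrightarrow> lin_on K s' (\<lambda>x. f (h x))"
  unfolding lin_on_def by (simp add: module_hom.add module_hom.scale)

lemma lin_on_diff:
  assumes "module s" shows "lin_on K s h \<Longrightarrow> lin_on K s h' \<Longrightarrow> lin_on K s (\<lambda>x. h x - h' x)"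
proof -
  interpret module s by fact
  show "lin_on K s h \<Longrightarrow> lin_on K s h' \<Longrightarrow> lin_on K s (\<lambda>x. h x - h' x)"
    unfolding lin_on_def by (simp add: scale_right_diff_distrib)
qed

lemma lin_on_scale:
  assumes "module s" shows "lin_on K s h \<Longrightarrow> lin_on K s (\<lambda>x. s r (h x))"
proof -
  interpret module s by fact
  show "lin_on K s h \<Longrightarrow> lin_on K s (\<lambda>x. s r (h x))"
    unfolding lin_on_def by (simp add: scale_right_distrib mult.commute)
qed

lemma lin_on_free:
  assumes "module s" shows "lin_on K s (\<lambda>x. \<Sum>i<n. s (x i) (b i))"
proof -
  interpret module s by fact
  show ?thesis unfolding lin_on_def by (simp add: scale_left_distrib scale_sum_right sum.distrib)
qed

lemma lin_on_inv_into:
  assumes f: "module_hom sA sB f" and "inj f" and v: "lin_on K sB v"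
    and range: "\<And>x. x \<in> K \<Longrightarrow> v x \<in> range f"
  shows "lin_on K sA (\<lambda>x. inv f (v x))"
proof -
  interpret f: module_hom sA sB f by fact
  have f_inv: "f (inv f (v x)) = v x" if "x \<in> K" for x using range[OF that] by (rule f_inv_into_f)
  have inv_eq: "inv f (f a) = a" for a using \<open>inj f\<close> by (rule inv_f_f)
  show ?thesis
    unfolding lin_on_def
  proof (intro conjI ballI allI)
    fix x y assume "x \<in> K" "y \<in> K"
    then have "v (\<lambda>i. x i + y i) = f (inv f (v x) + inv f (v y))"
      using v f_inv unfolding lin_on_def by (simp add: f.add)
    then show "inv f (v (\<lambda>i. x i + y i)) = inv f (v x) + inv f (v y)" by (simp add: inv_eq)
  next
    fix r x assume "x \<in> K"
    then have "v (\<lambda>i. r * x i) = f (sA r (inv f (v x)))"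
      using v f_inv unfolding lin_on_def by (simp add: f.scale)
    then show "inv f (v (\<lambda>i. r * x i)) = sA r (inv f (v x))" by (simp add: inv_eq)
  qed
qed

lemma lin_on_lincomb:
  assumes s: "module s" and h: "lin_on (range (lincomb m gen)) s h"
  shows "h (lincomb m gen d) = (\<Sum>j<m. s (d j) (h (gen j)))"
proof -
  interpret module s by fact
  have add: "h (\<lambda>i. lincomb m gen d i + lincomb m gen d' i) = h (lincomb m gen d) + h (lincomb m gen d')"
    for d d' using h unfolding lin_on_def by blast
  have scale: "h (\<lambda>i. r * lincomb m gen d i) = s r (h (lincomb m gen d))" for r d
    using h unfolding lin_on_def by blast
  have trunc: "h (lincomb m gen (\<lambda>j. if j < q then d j else 0)) = (\<Sum>j<q. s (d j) (h (gen j)))"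
    if "q \<le> m" for q
    using that
  proof (induct q)
    case 0
    have "(\<lambda>j. if j < 0 then d j else 0) = (\<lambda>j. 0 * d j)" by simp
    then show ?case using scale[of 0 d] by (simp add: lincomb_scale lincomb_zero)
  next
    case (Suc q)
    let ?d = "\<lambda>j. if j < q then d j else 0"
    have "(\<lambda>j. if j < Suc q then d j else 0) = (\<lambda>j. ?d j + d q * unit_vec q j)"
      by (auto simp: unit_vec_def less_Suc_eq)
    then have "h (lincomb m gen (\<lambda>j. if j < Suc q then d j else 0)) =
        h (lincomb m gen ?d) + h (\<lambda>i. d q * lincomb m gen (unit_vec q) i)"
      by (simp add: lincomb_add add lincomb_scale[symmetric])
    also have "\<dots> = (\<Sum>j<q. s (d j) (h (gen j))) + s (d q) (h (gen q))"
      using Suc scale[of "d q" "unit_vec q"] by (simp add: lincomb_unit_vec)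
    finally show ?case by simp
  qed
  have "lincomb m gen (\<lambda>j. if j < m then d j else 0) = lincomb m gen d"
    by (rule lincomb_cong) simp_all
  with trunc[of m] show ?thesis by simp
qed

lemma lin_on_factor_lincomb:
  assumes s: "module s" and \<Lambda>: "lin_on UNIV s \<Lambda>"
    and cong: "\<And>d d'. (\<And>j. j < m \<Longrightarrow> d j = d' j) \<Longrightarrow> \<Lambda> d = \<Lambda> d'"
    and rel: "\<And>d. d \<in> relations m gen \<Longrightarrow> \<Lambda> d = 0"
  obtains \<psi> where "lin_on (range (lincomb m gen)) s \<psi>" "\<And>d. \<psi> (lincomb m gen d) = \<Lambda> d"
proof -
  have wd: "\<Lambda> d = \<Lambda> d'" if eq: "lincomb m gen d = lincomb m gen d'" for d d'
  proof -
    obtain e where e: "e \<in> fvec m" "\<And>j. j < m \<Longrightarrow> e j = d j - d' j"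
      by (rule fvec_truncate[of m "\<lambda>j. d j - d' j"]) blast
    have "lincomb m gen e = lincomb m gen (\<lambda>j. d j - d' j)" using e(2) by (intro lincomb_cong) simp_all
    then have "e \<in> relations m gen" using e(1) eq by (simp add: relations_def lincomb_diff)
    then have diff: "\<Lambda> (\<lambda>j. d j - d' j) = 0" using rel cong[of e "\<lambda>j. d j - d' j"] e(2) by simp
    have "\<Lambda> (\<lambda>i. x i + y i) = \<Lambda> x + \<Lambda> y" for x y
      using \<Lambda> unfolding lin_on_def by simp
    from this[of "\<lambda>j. d j - d' j" d'] diff show ?thesis by simp
  qed
  define \<psi> where "\<psi> x = \<Lambda> (SOME d. x = lincomb m gen d)" for x
  have \<psi>: "\<psi> (lincomb m gen d) = \<Lambda> d" for d
    unfolding \<psi>_def by (rule wd[symmetric], rule someI[of "\<lambda>d'. lincomb m gen d = lincomb m gen d'"]) simp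
  have "lin_on (range (lincomb m gen)) s \<psi>"
    unfolding lin_on_def
  proof (intro conjI ballI allI)
    fix x y assume "x \<in> range (lincomb m gen)" "y \<in> range (lincomb m gen)"
    then obtain d d' where "x = lincomb m gen d" "y = lincomb m gen d'" by blast
    then show "\<psi> (\<lambda>i. x i + y i) = \<psi> x + \<psi> y"
      using \<Lambda> unfolding lin_on_def by (simp add: \<psi> lincomb_add[symmetric])
  next
    fix r x assume "x \<in> range (lincomb m gen)"
    then obtain d where "x = lincomb m gen d" by blast
    then show "\<psi> (\<lambda>i. r * x i) = s r (\<psi> x)"
      using \<Lambda> unfolding lin_on_def by (simp add: \<psi> lincomb_scale[symmetric])
  qed
  with \<psi> show ?thesis using that by blast
qed

section \<open>Absolute w-purity\<close>

(* The annihilator of the class of h in Ext^1(R^n/K, A), in the description of Ext^1 used by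
   abs_w_pure. *)
definition extension_ideal ::
    "('r::comm_ring_1 \<Rightarrow> 'a::ab_group_add \<Rightarrow> 'a) \<Rightarrow> nat \<Rightarrow> (nat \<Rightarrow> 'r) set \<Rightarrow> ((nat \<Rightarrow> 'r) \<Rightarrow> 'a) \<Rightarrow> 'r set"
  where "extension_ideal s n K h = {u. \<exists>a. \<forall>x\<in>K. s u (h x) = (\<Sum>i<n. s (x i) (a i))}"

lemma abs_w_pure_iff:
  "abs_w_pure s \<longleftrightarrow>
     (\<forall>n K h. fg_submod n K \<longrightarrow> lin_on K s h \<longrightarrow> contains_GV_ideal (extension_ideal s n K h))"
  unfolding abs_w_pure_def contains_GV_ideal_def extension_ideal_def by blast

lemma is_ideal_extension_ideal:
  assumes "module s" shows "is_ideal (extension_ideal s n K h)"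
proof -
  interpret module s by fact
  have mem: "u \<in> extension_ideal s n K h \<longleftrightarrow> (\<exists>a. \<forall>x\<in>K. s u (h x) = (\<Sum>i<n. s (x i) (a i)))" for u
    unfolding extension_ideal_def by simp
  show ?thesis
    unfolding is_ideal_def mem
  proof (intro conjI ballI allI impI)
    show "\<exists>a. \<forall>x\<in>K. s 0 (h x) = (\<Sum>i<n. s (x i) (a i))" by (intro exI[of _ "\<lambda>_. 0"]) simp
  next
    fix u v assume "u \<in> extension_ideal s n K h" "v \<in> extension_ideal s n K h"
    then obtain a b where "\<forall>x\<in>K. s u (h x) = (\<Sum>i<n. s (x i) (a i))"
      "\<forall>x\<in>K. s v (h x) = (\<Sum>i<n. s (x i) (b i))" unfolding mem by blast
    then have "\<forall>x\<in>K. s (u + v) (h x) = (\<Sum>i<n. s (x i) (a i + b i))"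
      by (simp add: scale_left_distrib scale_right_distrib sum.distrib)
    then show "\<exists>c. \<forall>x\<in>K. s (u + v) (h x) = (\<Sum>i<n. s (x i) (c i))"
      by (rule exI[of _ "\<lambda>i. a i + b i"])
  next
    fix r u assume "u \<in> extension_ideal s n K h"
    then obtain a where "\<forall>x\<in>K. s u (h x) = (\<Sum>i<n. s (x i) (a i))" unfolding mem by blast
    then have "\<forall>x\<in>K. s (r * u) (h x) = (\<Sum>i<n. s (x i) (s r (a i)))"
      by (simp add: scale_sum_right scale_left_commute flip: scale_scale)
    then show "\<exists>c. \<forall>x\<in>K. s (r * u) (h x) = (\<Sum>i<n. s (x i) (c i))"
      by (rule exI[of _ "\<lambda>i. s r (a i)"])
  qed
qed

lemma extension_ideal_scale:
  "module s \<Longrightarrow> {t. t * r \<in> extension_ideal s n K h} = extension_ideal s n K (\<lambda>x. s r (h x))"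
  unfolding extension_ideal_def by (simp add: module.scale_scale)

lemma extension_ideal_cong:
  "(\<And>x. x \<in> K \<Longrightarrow> h x = h' x) \<Longrightarrow> extension_ideal s n K h = extension_ideal s n K h'"
  unfolding extension_ideal_def by simp

lemma extension_ideal_subset_add_free:
  assumes "module s"
  shows "extension_ideal s n K h \<subseteq> extension_ideal s n K (\<lambda>x. h x + (\<Sum>i<n. s (x i) (b i)))"
proof
  interpret module s by fact
  fix u assume "u \<in> extension_ideal s n K h"
  then obtain a where "\<forall>x\<in>K. s u (h x) = (\<Sum>i<n. s (x i) (a i))" unfolding extension_ideal_def by blast
  then have "\<forall>x\<in>K. s u (h x + (\<Sum>i<n. s (x i) (b i))) = (\<Sum>i<n. s (x i) (a i + s u (b i)))"
    by (simp add: scale_right_distrib scale_sum_right sum.distrib mult.commute)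
  then show "u \<in> extension_ideal s n K (\<lambda>x. h x + (\<Sum>i<n. s (x i) (b i)))"
    unfolding extension_ideal_def by (intro CollectI exI)
qed

lemma extension_ideal_hom:
  assumes "module_hom s s' f"
  shows "extension_ideal s n K h \<subseteq> extension_ideal s' n K (\<lambda>x. f (h x))"
proof
  interpret f: module_hom s s' f by fact
  fix u assume "u \<in> extension_ideal s n K h"
  then obtain a where "\<forall>x\<in>K. s u (h x) = (\<Sum>i<n. s (x i) (a i))" unfolding extension_ideal_def by blast
  then have "\<forall>x\<in>K. s' u (f (h x)) = (\<Sum>i<n. s' (x i) (f (a i)))"
    by (simp add: f.sum flip: f.scale)
  then show "u \<in> extension_ideal s' n K (\<lambda>x. f (h x))"
    unfolding extension_ideal_def by (intro CollectI exI)
qed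

lemma abs_w_pureD:
  "abs_w_pure s \<Longrightarrow> fg_submod n K \<Longrightarrow> lin_on K s h \<Longrightarrow> contains_GV_ideal (extension_ideal s n K h)"
  unfolding abs_w_pure_iff by blast

lemma abs_w_pure_middle:
  assumes f: "module_hom sA sB f" and g: "module_hom sB sC g"
    and "inj f" and "surj g" and exact: "range f = {b. g b = 0}"
    and pure_A: "abs_w_pure sA" and pure_C: "abs_w_pure sC"
  shows "abs_w_pure sB"
  unfolding abs_w_pure_iff
proof (intro allI impI)
  interpret f: module_hom sA sB f by fact
  interpret g: module_hom sB sC g by fact
  have mB: "module sB" by (rule f.m2.module_axioms)
  fix n K \<phi> assume K: "fg_submod n K" and \<phi>: "lin_on K sB \<phi>"
  obtain J where J: "GV_ideal J" "J \<subseteq> extension_ideal sC n K (\<lambda>x. g (\<phi> x))"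
    using abs_w_pureD[OF pure_C K lin_on_hom[OF g \<phi>]] unfolding contains_GV_ideal_def by blast
  show "contains_GV_ideal (extension_ideal sB n K \<phi>)"
  proof (rule contains_GV_ideal_transitive[OF is_ideal_extension_ideal[OF mB] J(1)])
    fix r assume "r \<in> J"
    then obtain c where c: "\<forall>x\<in>K. sC r (g (\<phi> x)) = (\<Sum>i<n. sC (x i) (c i))"
      using J(2) unfolding extension_ideal_def by blast
    define b where "b i = inv g (c i)" for i
    define v where "v x = sB r (\<phi> x) - (\<Sum>i<n. sB (x i) (b i))" for x
    have "g (v x) = 0" if "x \<in> K" for x
      using c that \<open>surj g\<close> by (simp add: v_def b_def g.diff g.sum g.scale surj_f_inv_f)
    then have v_range: "v x \<in> range f" if "x \<in> K" for x using that exact by blast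
    have "lin_on K sB v" unfolding v_def by (intro lin_on_diff lin_on_scale lin_on_free mB \<phi>)
    then have \<psi>: "lin_on K sA (\<lambda>x. inv f (v x))" using lin_on_inv_into[OF f \<open>inj f\<close>] v_range by blast
    have "extension_ideal sA n K (\<lambda>x. inv f (v x)) \<subseteq> extension_ideal sB n K (\<lambda>x. f (inv f (v x)))"
      by (rule extension_ideal_hom[OF f])
    also have "\<dots> \<subseteq> extension_ideal sB n K (\<lambda>x. f (inv f (v x)) + (\<Sum>i<n. sB (x i) (b i)))"
      by (rule extension_ideal_subset_add_free[OF mB])
    also have "\<dots> = extension_ideal sB n K (\<lambda>x. sB r (\<phi> x))"
      by (rule extension_ideal_cong) (simp add: f_inv_into_f[OF v_range], simp add: v_def)
    also have "\<dots> = {t. t * r \<in> extension_ideal sB n K \<phi>}"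
      by (rule extension_ideal_scale[OF mB, symmetric])
    finally show "contains_GV_ideal {t. t * r \<in> extension_ideal sB n K \<phi>}"
      using abs_w_pureD[OF pure_A K \<psi>] contains_GV_ideal_mono by blast
  qed
qed

lemma surj_hom_lift_lincomb:
  assumes g: "module_hom sB sC g" and "surj g" and h: "lin_on (range (lincomb m gen)) sC h"
  obtains b where "\<And>d. g (\<Sum>j<m. sB (d j) (b j)) = h (lincomb m gen d)"
proof
  interpret g: module_hom sB sC g by fact
  fix d
  show "g (\<Sum>j<m. sB (d j) (inv g (h (gen j)))) = h (lincomb m gen d)"
    using lin_on_lincomb[OF g.m2.module_axioms h] \<open>surj g\<close> by (simp add: g.sum g.scale surj_f_inv_f)
qed

lemma lift_relation_mem_range:
  assumes g: "module_hom sB sC g" and exact: "range f = {b. g b = 0}"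
    and h: "lin_on (range (lincomb m gen)) sC h"
    and b: "\<And>d. g (\<Sum>j<m. sB (d j) (b j)) = h (lincomb m gen d)"
    and d: "d \<in> relations m gen"
  shows "(\<Sum>j<m. sB (d j) (b j)) \<in> range f"
proof -
  interpret g: module_hom sB sC g by fact
  have "g (\<Sum>j<m. sB (d j) (b j)) = h (lincomb m gen (\<lambda>_. 0))"
    using d b by (simp add: relations_def lincomb_zero)
  also have "\<dots> = 0"
    using lin_on_lincomb[OF g.m2.module_axioms h] by simp
  finally show ?thesis using exact by blast
qed

lemma lift_scaled_along_relations:
  assumes f: "module_hom sA sB f" and g: "module_hom sB sC g" and gf: "\<And>a. g (f a) = 0"
    and b: "\<And>d. g (\<Sum>j<m. sB (d j) (b j)) = h (lincomb m gen d)"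
    and a: "\<And>d. d \<in> relations m gen \<Longrightarrow> sB r (\<Sum>j<m. sB (d j) (b j)) = f (\<Sum>j<m. sA (d j) (a j))"
  obtains \<psi> where "lin_on (range (lincomb m gen)) sB \<psi>"
    "\<And>x. x \<in> range (lincomb m gen) \<Longrightarrow> g (\<psi> x) = sC r (h x)"
proof -
  interpret f: module_hom sA sB f by fact
  interpret g: module_hom sB sC g by fact
  define \<Lambda> where "\<Lambda> d = sB r (\<Sum>j<m. sB (d j) (b j)) - f (\<Sum>j<m. sA (d j) (a j))" for d
  have "lin_on UNIV sB \<Lambda>" unfolding \<Lambda>_def
    by (intro lin_on_diff lin_on_scale lin_on_free lin_on_hom[OF f] f.m1.module_axioms f.m2.module_axioms)
  moreover have "\<Lambda> d = \<Lambda> d'" if "\<And>j. j < m \<Longrightarrow> d j = d' j" for d d'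
    using that by (simp add: \<Lambda>_def)
  moreover have "\<Lambda> d = 0" if "d \<in> relations m gen" for d
    using a[OF that] by (simp add: \<Lambda>_def)
  ultimately obtain \<psi> where \<psi>: "lin_on (range (lincomb m gen)) sB \<psi>" "\<And>d. \<psi> (lincomb m gen d) = \<Lambda> d"
    by (rule lin_on_factor_lincomb[OF f.m2.module_axioms]) blast+
  have "g (\<psi> x) = sC r (h x)" if "x \<in> range (lincomb m gen)" for x
    using that b gf by (auto simp: \<psi>(2) \<Lambda>_def g.diff g.scale)
  with \<psi>(1) show ?thesis by (rule that)
qed

lemma abs_w_pure_quotient:
  fixes sA :: "'r::comm_ring_1 \<Rightarrow> 'a::ab_group_add \<Rightarrow> 'a"
  assumes coh: "coherent_ring TYPE('r)"
    and f: "module_hom sA sB f" and g: "module_hom sB sC g"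
    and "inj f" and "surj g" and exact: "range f = {b. g b = 0}"
    and pure_A: "abs_w_pure sA" and pure_B: "abs_w_pure sB"
  shows "abs_w_pure sC"
  unfolding abs_w_pure_iff
proof (intro allI impI)
  interpret f: module_hom sA sB f by fact
  interpret g: module_hom sB sC g by fact
  have mB: "module sB" and mC: "module sC" by (rule f.m2.module_axioms g.m2.module_axioms)+
  fix n K h assume K: "fg_submod n K" and h: "lin_on K sC h"
  obtain m gen where gen: "\<And>j. j < m \<Longrightarrow> gen j \<in> fvec n" and K_eq: "K = range (lincomb m gen)"
    using K unfolding fg_submod_iff by blast
  obtain b where b: "\<And>d. g (\<Sum>j<m. sB (d j) (b j)) = h (lincomb m gen d)"
    using surj_hom_lift_lincomb[OF g \<open>surj g\<close>] h K_eq by blast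
  define \<Lambda> where "\<Lambda> d = (\<Sum>j<m. sB (d j) (b j))" for d
  have \<Lambda>_range: "\<Lambda> d \<in> range f" if "d \<in> relations m gen" for d
    unfolding \<Lambda>_def using g exact h b that unfolding K_eq by (rule lift_relation_mem_range)
  define \<phi> where "\<phi> d = inv f (\<Lambda> d)" for d
  have "lin_on (relations m gen) sA \<phi>"
    unfolding \<phi>_def \<Lambda>_def using \<Lambda>_range
    by (intro lin_on_inv_into[OF f \<open>inj f\<close> lin_on_free[OF mB]]) (simp add: \<Lambda>_def)
  moreover have "fg_submod m (relations m gen)" using coh gen by (rule fg_relations)
  ultimately obtain J where J: "GV_ideal J" "J \<subseteq> extension_ideal sA m (relations m gen) \<phi>"
    using abs_w_pureD[OF pure_A] unfolding contains_GV_ideal_def by blast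
  show "contains_GV_ideal (extension_ideal sC n K h)"
  proof (rule contains_GV_ideal_transitive[OF is_ideal_extension_ideal[OF mC] J(1)])
    fix r assume "r \<in> J"
    then obtain a where a: "\<forall>d\<in>relations m gen. sA r (\<phi> d) = (\<Sum>j<m. sA (d j) (a j))"
      using J(2) unfolding extension_ideal_def by blast
    have "sB r (\<Lambda> d) = f (\<Sum>j<m. sA (d j) (a j))" if "d \<in> relations m gen" for d
    proof -
      have "sB r (\<Lambda> d) = f (sA r (\<phi> d))"
        using f_inv_into_f[OF \<Lambda>_range[OF that]] by (simp add: \<phi>_def f.scale)
      then show ?thesis using a that by simp
    qed
    then obtain \<psi> where \<psi>: "lin_on K sB \<psi>" "\<And>x. x \<in> K \<Longrightarrow> g (\<psi> x) = sC r (h x)"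
      using lift_scaled_along_relations[OF f g _ b] exact unfolding K_eq \<Lambda>_def by blast
    have "extension_ideal sC n K (\<lambda>x. g (\<psi> x)) = {t. t * r \<in> extension_ideal sC n K h}"
      unfolding extension_ideal_scale[OF mC] using \<psi>(2) by (rule extension_ideal_cong)
    then show "contains_GV_ideal {t. t * r \<in> extension_ideal sC n K h}"
      using abs_w_pureD[OF pure_B K \<psi>(1)] extension_ideal_hom[OF g] contains_GV_ideal_mono by metis
  qed
qed

theorem lemma2p12:
  fixes sA :: "'r::comm_ring_1 \<Rightarrow> 'a::ab_group_add \<Rightarrow> 'a"
    and sB :: "'r \<Rightarrow> 'b::ab_group_add \<Rightarrow> 'b"
    and sC :: "'r \<Rightarrow> 'c::ab_group_add \<Rightarrow> 'c"
    and f :: "'a \<Rightarrow> 'b" and g :: "'b \<Rightarrow> 'c"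
  assumes "coherent_ring TYPE('r)"
    and "module sA" and "module sB" and "module sC"
    and "module_hom sA sB f" and "module_hom sB sC g"
    and "inj f" and "surj g" and "range f = {b. g b = 0}"
    and "abs_w_pure sA"
  shows "abs_w_pure sB \<longleftrightarrow> abs_w_pure sC"
  using abs_w_pure_quotient[OF assms(1,5-10)] abs_w_pure_middle[OF assms(5-10)] by blast

end
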